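(* Consider the perturbed system $\dot x = f(x)+\psi(x)$, where $f,\psi:\mathbb R^n\to\mathbb R^n$ are continuous, $f(0)=0$, solutions exist and are unique, and there exists $L>0$ such that $\|\psi(x)\|\leq L\|x\|$ for all $x\in\mathbb R^n$. Suppose the origin of the nominal system $\dot x = f(x)$ is fixed-time stable, and that there exists a continuously differentiable, positive definite, radially unbounded function $V:\mathbb R^n\to\mathbb R$ such that, along trajectories of the nominal system, $\dot V(x)\leq -aV(x)^p - bV(x)^q$ for all $x\neq 0$, with $a,b>0$, $0<p<1$, $q>1$. Assume further that there exist $k_1,k_2>0$ such that $V(x)\geq k_1\|x\|^2$ and $\left\|\frac{\partial V}{\partial x}(x)\right\|\leq k_2\|x\|$ for all $x\in\mathbb R^n$. Then the origin of the perturbed system $\dot x = f(x)+\psi(x)$ is fixed-time stable.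
   Context: $\|\cdot\|$ is the Euclidean norm. Fixed-time stability (FxTS) of the origin is understood as: there is a neighborhood $D$ of the origin (possibly all of $\mathbb R^n$) such that every trajectory starting in $D$ reaches the origin (and stays there) within a time $T$ bounded by a constant independent of the initial condition in $D$. *)

theory Defs
  imports "HOL-Analysis.Analysis"
begin

definition is_solution :: "(real^'n \<Rightarrow> real^'n) \<Rightarrow> real^'n \<Rightarrow> (real \<Rightarrow> real^'n) \<Rightarrow> bool" where
  "is_solution F x0 x \<longleftrightarrow> x 0 = x0 \<and>
     (\<forall>t\<ge>0. (x has_vector_derivative F (x t)) (at t within {0..}))"

definition exist_unique_solutions :: "(real^'n \<Rightarrow> real^'n) \<Rightarrow> bool" where
  "exist_unique_solutions F \<longleftrightarrow>
     (\<forall>x0. \<exists>x. is_solution F x0 x) \<and>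
     (\<forall>x0 x y. is_solution F x0 x \<longrightarrow> is_solution F x0 y \<longrightarrow> (\<forall>t\<ge>0. x t = y t))"

definition fixed_time_stable :: "(real^'n \<Rightarrow> real^'n) \<Rightarrow> bool" where
  "fixed_time_stable F \<longleftrightarrow>
     (\<exists>D T. open D \<and> 0 \<in> D \<and>
        (\<forall>x0\<in>D. \<forall>x. is_solution F x0 x \<longrightarrow>
            (\<exists>t\<in>{0..T}. \<forall>s\<ge>t. x s = 0)))"

end

theory Submission
  imports Defs
begin

text \<open>Near the origin the perturbation is absorbed by the fractional-power decay term.
  The bounds on \<open>\<nabla>V\<close>, \<open>\<psi>\<close> and \<open>V\<close> give \<open>\<nabla>V \<bullet> \<psi> \<le> K V\<close> with \<open>K = k\<^sub>2 L / k\<^sub>1\<close>, and on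
  the sublevel set \<open>{V < \<delta>}\<close> with \<open>\<delta>\<^bsup>1-p\<^esup> = a/(2K)\<close> also \<open>V = V\<^bsup>1-p\<^esup> V\<^sup>p \<le> a/(2K) V\<^sup>p\<close>,
  so there \<open>V\<close> decreases along perturbed trajectories at rate at least \<open>(a/2) V\<^sup>p\<close>.
  Hence the sublevel set is forward invariant and \<open>V\<^bsup>1-p\<^esup>\<close> decreases with slope at least
  \<open>(1-p) a/2\<close>, so every trajectory starting in it reaches the origin before the uniform time
  \<open>\<delta>\<^bsup>1-p\<^esup> / ((1-p) a/2)\<close> and stays there.\<close>

lemma self_le_mult_powr:
  fixes v c p :: real
  assumes "0 \<le> v" "v powr (1 - p) \<le> c"
  shows "v \<le> c * v powr p"
proof (cases "v = 0")
  case False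
  then have "v = v powr (1 - p) * v powr p"
    using assms(1) by (simp add: powr_add[symmetric])
  also have "\<dots> \<le> c * v powr p"
    using assms(2) by (intro mult_right_mono) auto
  finally show ?thesis .
qed simp

lemma inner_le_of_linear_bounds:
  fixes G P x :: "'a::real_inner"
  assumes "norm G \<le> k2 * norm x" "norm P \<le> L * norm x" "k1 * (norm x)\<^sup>2 \<le> v"
    and "0 < k1" "0 \<le> k2" "0 \<le> L"
  shows "G \<bullet> P \<le> (k2 * L / k1) * v"
proof -
  have "G \<bullet> P \<le> norm G * norm P" by (rule norm_cauchy_schwarz)
  also have "\<dots> \<le> (k2 * norm x) * (L * norm x)"
    using assms by (intro mult_mono) auto
  also have "\<dots> = (k2 * L / k1) * (k1 * (norm x)\<^sup>2)"
    using assms(4) by (simp add: power2_eq_square field_simps)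
  also have "\<dots> \<le> (k2 * L / k1) * v"
    using assms by (intro mult_left_mono) auto
  finally show ?thesis .
qed

lemma perturbed_decay_on_sublevel:
  fixes f \<psi> gradV :: "'a::real_inner \<Rightarrow> 'a" and V :: "'a \<Rightarrow> real"
  assumes V_decay: "\<forall>x. x \<noteq> 0 \<longrightarrow> gradV x \<bullet> f x \<le> - a * V x powr p - b * V x powr q"
    and psi_bound: "\<forall>x. norm (\<psi> x) \<le> L * norm x"
    and V_lower: "\<forall>x. V x \<ge> k1 * (norm x)\<^sup>2"
    and gradV_bound: "\<forall>x. norm (gradV x) \<le> k2 * norm x"
    and "V 0 = 0" "0 \<le> b" "0 < L" "0 < k1" "0 < k2"
    and sublevel: "V x powr (1 - p) \<le> a * k1 / (2 * k2 * L)"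
  shows "gradV x \<bullet> (f x + \<psi> x) \<le> - (a / 2) * V x powr p"
proof (cases "x = 0")
  case True
  then show ?thesis using gradV_bound[rule_format, of 0] \<open>V 0 = 0\<close> by simp
next
  case False
  have "0 \<le> k1 * (norm x)\<^sup>2" using \<open>0 < k1\<close> by simp
  then have "0 \<le> V x" using V_lower[rule_format, of x] by linarith
  have "0 \<le> b * V x powr q" using \<open>0 \<le> b\<close> by simp
  then have nominal: "gradV x \<bullet> f x \<le> - a * V x powr p"
    using V_decay[rule_format, OF False] by linarith
  have "gradV x \<bullet> \<psi> x \<le> (k2 * L / k1) * V x"
    using assms by (intro inner_le_of_linear_bounds) auto
  also have "\<dots> \<le> (k2 * L / k1) * (a * k1 / (2 * k2 * L) * V x powr p)"
    using self_le_mult_powr[OF \<open>0 \<le> V x\<close> sublevel] assms by (intro mult_left_mono) auto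
  also have "\<dots> = (a / 2) * V x powr p"
    using assms by (simp add: field_simps)
  finally show ?thesis
    using nominal by (simp add: inner_add_right)
qed

lemma continuous_on_solution:
  assumes "is_solution F x0 x"
  shows "continuous_on {0..} x"
  using assms unfolding is_solution_def continuous_on_eq_continuous_within
  by (auto intro: has_vector_derivative_continuous)

lemma has_real_derivative_along_solution:
  assumes "is_solution F x0 x" "0 < t"
    and V_deriv: "(V has_derivative (\<lambda>h. G \<bullet> h)) (at (x t))"
  shows "((\<lambda>s. V (x s)) has_real_derivative G \<bullet> F (x t)) (at t)"
proof -
  have "at t within {0..} = at t"
    using \<open>0 < t\<close> by (intro at_within_interior) (simp add: interior_real_atLeast)
  moreover have "(x has_vector_derivative F (x t)) (at t within {0..})"
    using assms(1,2) unfolding is_solution_def by simp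
  ultimately have "(x has_derivative (\<lambda>h. h *\<^sub>R F (x t))) (at t)"
    by (simp add: has_vector_derivative_def)
  from diff_chain_at[OF this V_deriv] show ?thesis
    unfolding has_field_derivative_def by (simp add: o_def mult_commute_abs)
qed

lemma nonincreasing_while_below_level:
  fixes g D :: "real \<Rightarrow> real"
  assumes cont: "continuous_on {0..} g"
    and deriv: "\<And>t. 0 < t \<Longrightarrow> (g has_real_derivative D t) (at t)"
    and nonpos: "\<And>t. 0 < t \<Longrightarrow> g t < \<delta> \<Longrightarrow> D t \<le> 0"
    and "0 \<le> t" "t \<le> s" and below: "\<And>\<tau>. t < \<tau> \<Longrightarrow> \<tau> < s \<Longrightarrow> g \<tau> < \<delta>"
  shows "g s \<le> g t"
proof (rule DERIV_nonpos_imp_decreasing_open[OF \<open>t \<le> s\<close>])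
  fix \<tau> assume "t < \<tau>" "\<tau> < s"
  with \<open>0 \<le> t\<close> have "(g has_real_derivative D \<tau>) (at \<tau>)" "D \<tau> \<le> 0"
    using deriv nonpos below by auto
  then show "\<exists>y. (g has_real_derivative y) (at \<tau>) \<and> y \<le> 0" by blast
next
  show "continuous_on {t..s} g"
    using cont by (rule continuous_on_subset) (use \<open>0 \<le> t\<close> in auto)
qed

lemma stays_below_level:
  fixes g D :: "real \<Rightarrow> real"
  assumes cont: "continuous_on {0..} g"
    and deriv: "\<And>t. 0 < t \<Longrightarrow> (g has_real_derivative D t) (at t)"
    and nonpos: "\<And>t. 0 < t \<Longrightarrow> g t < \<delta> \<Longrightarrow> D t \<le> 0"
    and "0 \<le> t" "g t < \<delta>" "t \<le> r"
  shows "g r < \<delta>"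
proof (rule ccontr)
  assume "\<not> g r < \<delta>"
  define S where "S = {t..r} \<inter> g -` {\<delta>..}"
  have "continuous_on {t..r} g"
    using cont by (rule continuous_on_subset) (use \<open>0 \<le> t\<close> in auto)
  then have "closed S"
    unfolding S_def by (intro continuous_closed_preimage) auto
  moreover have "bounded S"
    unfolding S_def by (rule bounded_Int) simp
  ultimately have "compact S"
    by (simp add: compact_eq_bounded_closed)
  moreover have "S \<noteq> {}"
    using \<open>\<not> g r < \<delta>\<close> \<open>t \<le> r\<close> unfolding S_def by auto
  ultimately obtain s where "s \<in> S" and first_exit: "\<forall>s'\<in>S. s \<le> s'"
    by (meson compact_attains_inf)
  have "t \<le> s" "s \<le> r" "\<delta> \<le> g s" using \<open>s \<in> S\<close> unfolding S_def by auto
  have "g s \<le> g t"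
  proof (rule nonincreasing_while_below_level[OF cont deriv nonpos \<open>0 \<le> t\<close> \<open>t \<le> s\<close>])
    fix \<tau> assume "t < \<tau>" "\<tau> < s"
    then have "\<tau> \<notin> S" using first_exit by auto
    with \<open>t < \<tau>\<close> \<open>\<tau> < s\<close> \<open>s \<le> r\<close> show "g \<tau> < \<delta>" unfolding S_def by auto
  qed
  with \<open>\<delta> \<le> g s\<close> \<open>g t < \<delta>\<close> show False by simp
qed

lemma nonincreasing_below_level:
  fixes g D :: "real \<Rightarrow> real"
  assumes cont: "continuous_on {0..} g"
    and deriv: "\<And>t. 0 < t \<Longrightarrow> (g has_real_derivative D t) (at t)"
    and nonpos: "\<And>t. 0 < t \<Longrightarrow> g t < \<delta> \<Longrightarrow> D t \<le> 0"
    and "0 \<le> t" "g t < \<delta>" "t \<le> s"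
  shows "g s \<le> g t"
proof (rule nonincreasing_while_below_level[OF cont deriv nonpos \<open>0 \<le> t\<close> \<open>t \<le> s\<close>])
  fix \<tau> assume "t < \<tau>"
  then show "g \<tau> < \<delta>"
    using stays_below_level[OF cont deriv nonpos \<open>0 \<le> t\<close> \<open>g t < \<delta>\<close>] by simp
qed

lemma hits_zero_within:
  fixes g D :: "real \<Rightarrow> real"
  assumes cont: "continuous_on {0..} g"
    and deriv: "\<And>t. 0 < t \<Longrightarrow> (g has_real_derivative D t) (at t)"
    and nonneg: "\<And>t. 0 \<le> t \<Longrightarrow> 0 \<le> g t"
    and decay: "\<And>t. 0 < t \<Longrightarrow> g t < \<delta> \<Longrightarrow> D t \<le> - k * g t powr p"
    and "0 < k" "p < 1" "g 0 < \<delta>"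
  shows "\<exists>t\<in>{0..\<delta> powr (1 - p) / (k * (1 - p))}. g t = 0"
proof (rule ccontr)
  define T where "T = \<delta> powr (1 - p) / (k * (1 - p))"
  define h where "h t = g t powr (1 - p) + k * (1 - p) * t" for t
  assume "\<not> (\<exists>t\<in>{0..T}. g t = 0)"
  then have pos: "0 < g t" if "0 \<le> t" "t \<le> T" for t
    using nonneg[of t] that by (auto simp: order_le_less)
  have "0 \<le> g 0" using nonneg by simp
  then have "0 < \<delta>" using \<open>g 0 < \<delta>\<close> by simp
  then have "0 \<le> T" unfolding T_def using \<open>0 < k\<close> \<open>p < 1\<close> by simp
  have nonpos: "D t \<le> 0" if "0 < t" "g t < \<delta>" for t
  proof -
    have "0 \<le> k * g t powr p" using \<open>0 < k\<close> by simp
    with decay[OF that] show ?thesis by linarith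
  qed
  have "h T \<le> h 0"
  proof (rule DERIV_nonpos_imp_decreasing_open[OF \<open>0 \<le> T\<close>])
    show "continuous_on {0..T} h"
    proof -
      have "continuous_on {0..T} g" using cont by (rule continuous_on_subset) auto
      moreover have "\<forall>t\<in>{0..T}. g t \<noteq> 0" by (fastforce dest: pos)
      ultimately show ?thesis
        unfolding h_def by (intro continuous_intros continuous_on_powr) auto
    qed
    fix \<tau> assume "0 < \<tau>" "\<tau> < T"
    then have "0 < g \<tau>"
      using pos by simp
    have "g \<tau> < \<delta>"
      by (rule stays_below_level[OF cont deriv nonpos]) (use \<open>g 0 < \<delta>\<close> \<open>0 < \<tau>\<close> in auto)
    have "(h has_real_derivative (1 - p) * g \<tau> powr (1 - p - 1) * D \<tau> + k * (1 - p)) (at \<tau>)"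
      unfolding h_def
      by (intro DERIV_add DERIV_chain2[OF has_real_derivative_powr[OF \<open>0 < g \<tau>\<close>] deriv[OF \<open>0 < \<tau>\<close>]]
          DERIV_cmult_Id)
    moreover have "(1 - p) * g \<tau> powr (1 - p - 1) * D \<tau> + k * (1 - p) \<le> 0"
    proof -
      have "(1 - p) * g \<tau> powr (1 - p - 1) * D \<tau>
          \<le> (1 - p) * g \<tau> powr (1 - p - 1) * (- k * g \<tau> powr p)"
        using decay[OF \<open>0 < \<tau>\<close> \<open>g \<tau> < \<delta>\<close>] \<open>p < 1\<close> by (intro mult_left_mono) auto
      also have "\<dots> = - k * (1 - p) * (g \<tau> powr (1 - p - 1) * g \<tau> powr p)"
        by (simp only: mult_ac mult_minus_left mult_minus_right)
      also have "g \<tau> powr (1 - p - 1) * g \<tau> powr p = 1"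
        using \<open>0 < g \<tau>\<close> by (simp add: powr_add[symmetric])
      finally show ?thesis by simp
    qed
    ultimately show "\<exists>y. (h has_real_derivative y) (at \<tau>) \<and> y \<le> 0"
      by blast
  qed
  moreover have "g 0 powr (1 - p) < \<delta> powr (1 - p)"
    using \<open>0 \<le> g 0\<close> \<open>g 0 < \<delta>\<close> \<open>p < 1\<close> by (intro powr_less_mono2) auto
  moreover have "k * (1 - p) * T = \<delta> powr (1 - p)"
    unfolding T_def using \<open>0 < k\<close> \<open>p < 1\<close> by simp
  ultimately show False
    unfolding h_def using powr_ge_zero[of "g T" "1 - p"] by linarith
qed

lemma reaches_zero_within:
  fixes g D :: "real \<Rightarrow> real"
  assumes cont: "continuous_on {0..} g"
    and deriv: "\<And>t. 0 < t \<Longrightarrow> (g has_real_derivative D t) (at t)"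
    and nonneg: "\<And>t. 0 \<le> t \<Longrightarrow> 0 \<le> g t"
    and decay: "\<And>t. 0 < t \<Longrightarrow> g t < \<delta> \<Longrightarrow> D t \<le> - k * g t powr p"
    and "0 < k" "p < 1" "g 0 < \<delta>"
  shows "\<exists>t\<in>{0..\<delta> powr (1 - p) / (k * (1 - p))}. \<forall>s\<ge>t. g s = 0"
proof -
  obtain t where t: "t \<in> {0..\<delta> powr (1 - p) / (k * (1 - p))}" "g t = 0"
    using hits_zero_within[OF assms] by blast
  have nonpos: "D s \<le> 0" if "0 < s" "g s < \<delta>" for s
  proof -
    have "0 \<le> k * g s powr p" using \<open>0 < k\<close> by simp
    with decay[OF that] show ?thesis by linarith
  qed
  have "0 < \<delta>" using nonneg[of 0] \<open>g 0 < \<delta>\<close> by simp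
  have "g s = 0" if "t \<le> s" for s
  proof -
    have "g s \<le> g t"
      using t \<open>0 < \<delta>\<close> that by (intro nonincreasing_below_level[OF cont deriv nonpos]) auto
    with t nonneg[of s] that show ?thesis by simp
  qed
  with t show ?thesis by blast
qed

theorem corollary1:
  fixes f \<psi> :: "real^'n \<Rightarrow> real^'n"
    and V :: "real^'n \<Rightarrow> real"
    and gradV :: "real^'n \<Rightarrow> real^'n"
    and L a b p q k1 k2 :: real
  assumes f_cont: "continuous_on UNIV f"
    and psi_cont: "continuous_on UNIV \<psi>"
    and f0: "f 0 = 0"
    and sol_nom: "exist_unique_solutions f"
    and sol_pert: "exist_unique_solutions (\<lambda>x. f x + \<psi> x)"
    and L_pos: "L > 0"
    and psi_bound: "\<forall>x. norm (\<psi> x) \<le> L * norm x"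
    and nom_fxts: "fixed_time_stable f"
    and V_deriv: "\<forall>x. (V has_derivative (\<lambda>h. gradV x \<bullet> h)) (at x)"
    and gradV_cont: "continuous_on UNIV gradV"
    and V_pd: "V 0 = 0" "\<forall>x. x \<noteq> 0 \<longrightarrow> V x > 0"
    and V_rad_unbdd: "filterlim V at_top at_infinity"
    and abpq: "a > 0" "b > 0" "0 < p" "p < 1" "q > 1"
    and V_decay: "\<forall>x. x \<noteq> 0 \<longrightarrow> gradV x \<bullet> f x \<le> - a * V x powr p - b * V x powr q"
    and k12: "k1 > 0" "k2 > 0"
    and V_lower: "\<forall>x. V x \<ge> k1 * (norm x)\<^sup>2"
    and gradV_bound: "\<forall>x. norm (gradV x) \<le> k2 * norm x"
  shows "fixed_time_stable (\<lambda>x. f x + \<psi> x)"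
proof -
  define c where "c = a * k1 / (2 * k2 * L)"
  define \<delta> where "\<delta> = c powr (1 / (1 - p))"
  define T where "T = \<delta> powr (1 - p) / (a / 2 * (1 - p))"
  have "0 < \<delta>" "\<delta> powr (1 - p) = c"
    unfolding \<delta>_def c_def using abpq k12 L_pos by (simp_all add: powr_powr)
  have V_nonneg: "0 \<le> V y" for y
    using V_pd by (cases "y = 0") (auto simp: less_imp_le)
  have decay: "gradV y \<bullet> (f y + \<psi> y) \<le> - (a / 2) * V y powr p" if "V y < \<delta>" for y
    using perturbed_decay_on_sublevel[OF V_decay psi_bound V_lower gradV_bound] V_pd abpq k12 L_pos
      powr_mono2[of "1 - p" "V y" \<delta>] that V_nonneg \<open>\<delta> powr (1 - p) = c\<close>
    unfolding c_def by fastforce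
  have V_cont: "continuous_on UNIV V"
    using V_deriv by (intro continuous_at_imp_continuous_on) (auto dest: has_derivative_continuous)
  show ?thesis unfolding fixed_time_stable_def
  proof (intro exI conjI ballI allI impI)
    show "open {y. V y < \<delta>}" using open_Collect_less[OF V_cont continuous_on_const] .
    show "0 \<in> {y. V y < \<delta>}" using V_pd \<open>0 < \<delta>\<close> by simp
  next
    fix x0 x assume "x0 \<in> {y. V y < \<delta>}" and sol: "is_solution (\<lambda>x. f x + \<psi> x) x0 x"
    have "\<exists>t\<in>{0..T}. \<forall>s\<ge>t. V (x s) = 0"
      unfolding T_def
    proof (rule reaches_zero_within)
      show "continuous_on {0..} (\<lambda>t. V (x t))"
        using continuous_on_compose2[OF V_cont continuous_on_solution[OF sol]] by simp
      show "((\<lambda>s. V (x s)) has_real_derivative gradV (x t) \<bullet> (f (x t) + \<psi> (x t))) (at t)"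
        if "0 < t" for t
        using has_real_derivative_along_solution[OF sol that] V_deriv by blast
    qed (use decay V_nonneg abpq sol \<open>x0 \<in> {y. V y < \<delta>}\<close> in \<open>auto simp: is_solution_def\<close>)
    then show "\<exists>t\<in>{0..T}. \<forall>s\<ge>t. x s = 0"
      using V_pd by (metis less_irrefl)
  qed
qed

end
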